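(* Let $m,n\ge2$ be integers and let $h_n(z)=\frac{nz^n}{1+(n-1)z^n}$ and $h_{m,n}(z)=\frac{(mn)^nz^{mn}}{(1+(mn-1)z^m)^n}$. Both are rational maps having $1$ as a parabolic fixed point with multiplier $1$. For every $r\ge1$, with $D_r':=\widehat{\mathbb{C}}\setminus\overline{\{z:|z-(1-r)|<r\}}$, one has $h_n(\overline{D_r'})\subset D_r'\cup\{1\}$ and $h_{m,n}(\overline{D_r'})\subset D_r'\cup\{1\}$. In particular, the immediate parabolic basins of $1$ of $h_n$ and of $h_{m,n}$ contain $\widehat{\mathbb{C}}\setminus\overline{\mathbb{D}}$. *)

theory Defs
  imports "HOL-Analysis.Analysis"
begin

text \<open>The Riemann sphere is modelled as \<open>complex option\<close>, with \<open>None\<close> the point at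
infinity.  Its topology is the one induced by the (injective) stereographic embedding
\<open>sph\<close> onto the unit sphere of \<open>\<complex> \<times> \<real>\<close> (= R^3), north pole (0,1) = infinity.\<close>

definition sph :: "complex option \<Rightarrow> complex \<times> real" where
  "sph w = (case w of
      None \<Rightarrow> (0, 1)
    | Some z \<Rightarrow> (complex_of_real (2 / (1 + (cmod z)\<^sup>2)) * z,
                 ((cmod z)\<^sup>2 - 1) / ((cmod z)\<^sup>2 + 1)))"

definition hn :: "nat \<Rightarrow> complex \<Rightarrow> complex" where
  "hn n z = of_nat n * z ^ n / (1 + (of_nat n - 1) * z ^ n)"

definition hmn :: "nat \<Rightarrow> nat \<Rightarrow> complex \<Rightarrow> complex" where
  "hmn m n z = (of_nat (m * n)) ^ n * z ^ (m * n) / (1 + (of_nat (m * n) - 1) * z ^ m) ^ n"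

text \<open>Their extensions to the Riemann sphere (poles go to infinity; value at infinity
is the limit there).\<close>

definition hn_ext :: "nat \<Rightarrow> complex option \<Rightarrow> complex option" where
  "hn_ext n w = (case w of
      None \<Rightarrow> Some (of_nat n / (of_nat n - 1))
    | Some z \<Rightarrow> (if 1 + (of_nat n - 1) * z ^ n = 0 then None else Some (hn n z)))"

definition hmn_ext :: "nat \<Rightarrow> nat \<Rightarrow> complex option \<Rightarrow> complex option" where
  "hmn_ext m n w = (case w of
      None \<Rightarrow> Some ((of_nat (m * n)) ^ n / (of_nat (m * n) - 1) ^ n)
    | Some z \<Rightarrow> (if 1 + (of_nat (m * n) - 1) * z ^ m = 0 then None else Some (hmn m n z)))"

definition Dr' :: "real \<Rightarrow> complex option set" where
  "Dr' r = insert None (Some ` {z. cmod (z - complex_of_real (1 - r)) > r})"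

definition Dr'_closure :: "real \<Rightarrow> complex option set" where
  "Dr'_closure r = insert None (Some ` {z. cmod (z - complex_of_real (1 - r)) \<ge> r})"

definition basin :: "(complex option \<Rightarrow> complex option) \<Rightarrow> complex option \<Rightarrow> complex option set" where
  "basin f a = {w. (\<lambda>k. sph ((f ^^ k) w)) \<longlonglongrightarrow> sph a \<and> (\<forall>k. (f ^^ k) w \<noteq> a)}"

definition immediate_basin ::
  "(complex option \<Rightarrow> complex option) \<Rightarrow> complex option \<Rightarrow> complex option set \<Rightarrow> bool" where
  "immediate_basin f a U \<longleftrightarrow>
     (\<exists>w\<in>basin f a. sph ` U = connected_component_set (sph ` basin f a) (sph w)) \<and> f ` U \<subseteq> U"

end

theory Submission
  imports Defs
begin

text \<open>In the coordinate \<open>w = 1 / (z - 1)\<close>, which sends the parabolic point \<open>1\<close> to infinity, the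
  closed disk \<open>|z - (1 - r)| \<le> r\<close> (tangent to the unit circle at \<open>1\<close>) becomes the half-plane
  \<open>Re w \<le> -1 / (2 r)\<close>; write \<open>horo z = Re w\<close>. The Moebius map \<open>M\<^sub>a v = a v / (1 + (a - 1) v)\<close>
  acts on \<open>Re w\<close> as \<open>x \<mapsto> a x + (a - 1)\<close>, and by Cauchy--Schwarz
  \<open>n horo (z\<^sup>n) \<ge> horo z - (n - 1) / 2\<close> for \<open>|z| \<ge> 1\<close>. As \<open>h\<^sub>n z = M\<^sub>n (z\<^sup>n)\<close> and
  \<open>h\<^sub>m\<^sub>,\<^sub>n z = M\<^sub>m\<^sub>n (z\<^sup>m)\<^sup>n\<close>, both maps raise \<open>horo\<close> by a fixed \<open>\<delta> > 0\<close> on \<open>|z| \<ge> 1\<close>. Hence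
  they map the closure of every \<open>D\<^sub>r'\<close> into \<open>D\<^sub>r' \<union> {1}\<close>, and orbits starting in \<open>|z| > 1\<close> have
  \<open>horo \<rightarrow> \<infinity>\<close>, i.e. converge to \<open>1\<close>. The exterior of the unit disk together with \<open>\<infinity>\<close> is
  connected and contains the image of \<open>\<infinity>\<close>, so it lies in a single invariant component of the
  basin.\<close>

section \<open>Horocycles at 1\<close>

definition horo :: "complex \<Rightarrow> real" where
  "horo z = Re (1 / (z - 1))"

lemma horo_mult_norm_sq: "horo z * (cmod (z - 1))\<^sup>2 = Re z - 1"
proof (cases "z = 1")
  case False
  have "(cmod (z - 1))\<^sup>2 = (Re z - 1)\<^sup>2 + (Im z)\<^sup>2" by (simp add: cmod_power2)
  moreover have "(cmod (z - 1))\<^sup>2 \<noteq> 0" using False by simp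
  ultimately show ?thesis by (simp add: horo_def Re_divide)
qed simp

lemma horo_1 [simp]: "horo 1 = 0"
  by (simp add: horo_def)

lemma norm_sq_minus_circle:
  "(cmod (z - of_real (1 - r)))\<^sup>2 - r\<^sup>2 = (cmod (z - 1))\<^sup>2 * (1 + 2 * r * horo z)"
proof -
  have "(cmod (z - of_real (1 - r)))\<^sup>2 - r\<^sup>2 = (cmod (z - 1))\<^sup>2 + 2 * r * (Re z - 1)"
    by (simp add: cmod_power2 power2_diff power2_sum algebra_simps)
  also have "\<dots> = (cmod (z - 1))\<^sup>2 * (1 + 2 * r * horo z)"
    by (simp add: horo_mult_norm_sq[symmetric] algebra_simps)
  finally show ?thesis .
qed

lemma horo_ge_iff:
  assumes "z \<noteq> 1" "0 < r"
  shows "- 1 / (2 * r) \<le> horo z \<longleftrightarrow> r \<le> cmod (z - of_real (1 - r))"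
proof -
  have "- 1 / (2 * r) \<le> horo z \<longleftrightarrow> 0 \<le> 1 + 2 * r * horo z"
    using assms(2) by (simp add: field_simps) linarith
  also have "\<dots> \<longleftrightarrow> 0 \<le> (cmod (z - 1))\<^sup>2 * (1 + 2 * r * horo z)"
    using assms(1) by (simp add: zero_le_mult_iff)
  also have "\<dots> \<longleftrightarrow> r\<^sup>2 \<le> (cmod (z - of_real (1 - r)))\<^sup>2"
    using norm_sq_minus_circle[of z r] by linarith
  also have "\<dots> \<longleftrightarrow> r \<le> cmod (z - of_real (1 - r))"
    using assms(2) by (simp add: power2_le_iff_abs_le)
  finally show ?thesis .
qed

lemma horo_gt_iff:
  assumes "z \<noteq> 1" "0 < r"
  shows "- 1 / (2 * r) < horo z \<longleftrightarrow> r < cmod (z - of_real (1 - r))"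
proof -
  have "- 1 / (2 * r) < horo z \<longleftrightarrow> 0 < 1 + 2 * r * horo z"
    using assms(2) by (simp add: field_simps) linarith
  also have "\<dots> \<longleftrightarrow> 0 < (cmod (z - 1))\<^sup>2 * (1 + 2 * r * horo z)"
    using assms(1) by (simp add: zero_less_mult_iff)
  also have "\<dots> \<longleftrightarrow> r\<^sup>2 < (cmod (z - of_real (1 - r)))\<^sup>2"
    using norm_sq_minus_circle[of z r] by linarith
  also have "\<dots> \<longleftrightarrow> r < cmod (z - of_real (1 - r))"
    using assms(2) power2_le_iff_abs_le[of r "cmod (z - of_real (1 - r))"] by (simp add: not_le[symmetric])
  finally show ?thesis .
qed

lemma horo_ge_half_iff: "z \<noteq> 1 \<Longrightarrow> - 1 / 2 \<le> horo z \<longleftrightarrow> 1 \<le> cmod z"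
  using horo_ge_iff[of z 1] by simp

lemma horo_gt_half_iff: "z \<noteq> 1 \<Longrightarrow> - 1 / 2 < horo z \<longleftrightarrow> 1 < cmod z"
  using horo_gt_iff[of z 1] by simp

lemma horo_double_plus_1:
  assumes "z \<noteq> 1"
  shows "2 * horo z + 1 = ((cmod z)\<^sup>2 - 1) / (cmod (z - 1))\<^sup>2"
proof -
  have "(2 * horo z + 1) * (cmod (z - 1))\<^sup>2 = 2 * (horo z * (cmod (z - 1))\<^sup>2) + (cmod (z - 1))\<^sup>2"
    by (simp add: algebra_simps)
  also have "\<dots> = 2 * (Re z - 1) + (cmod (z - 1))\<^sup>2"
    by (simp only: horo_mult_norm_sq)
  also have "\<dots> = (cmod z)\<^sup>2 - 1"
    by (simp add: cmod_power2 power2_diff)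
  finally show ?thesis using assms by (simp add: eq_divide_eq)
qed

lemma norm_geometric_sum_sq_le:
  fixes z :: complex
  shows "(cmod (\<Sum>k<n. z ^ k))\<^sup>2 \<le> real n * (\<Sum>k<n. ((cmod z)\<^sup>2) ^ k)"
proof -
  have "cmod (\<Sum>k<n. z ^ k) \<le> (\<Sum>k<n. cmod z ^ k)"
    by (metis norm_power norm_sum sum.cong)
  hence "(cmod (\<Sum>k<n. z ^ k))\<^sup>2 \<le> (\<Sum>k<n. cmod z ^ k)\<^sup>2"
    by (simp add: power_mono)
  also have "\<dots> \<le> (\<Sum>k<n. (cmod z ^ k)\<^sup>2) * card {..<n}"
    by (rule sum_squared_le_sum_of_squares)
  finally show ?thesis
    by (simp add: power_mult[symmetric] mult.commute)
qed

text \<open>With \<open>z\<^sup>n - 1 = (z - 1) S\<close> and \<open>\<rho>\<^sup>n - 1 = (\<rho> - 1) T\<close> for \<open>\<rho> = |z|\<^sup>2\<close> and geometric sums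
  \<open>S\<close>, \<open>T\<close>, the claim \<open>2 horo z + 1 \<le> n (2 horo (z\<^sup>n) + 1)\<close> reduces to \<open>|S|\<^sup>2 \<le> n T\<close>.\<close>

lemma horo_power_ge:
  assumes z: "1 \<le> cmod z" and zn: "z ^ n \<noteq> 1"
  shows "horo z - (real n - 1) / 2 \<le> real n * horo (z ^ n)"
proof -
  define S where "S = (\<Sum>k<n. z ^ k)"
  define \<rho> where "\<rho> = (cmod z)\<^sup>2"
  define T where "T = (\<Sum>k<n. \<rho> ^ k)"
  have "z \<noteq> 1" using zn by auto
  have S: "z ^ n - 1 = (z - 1) * S" unfolding S_def by (rule power_diff_1_eq)
  have T: "\<rho> ^ n - 1 = (\<rho> - 1) * T" unfolding T_def by (rule power_diff_1_eq)
  have "S \<noteq> 0" using S zn by auto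
  have cs: "(cmod S)\<^sup>2 \<le> real n * T"
    unfolding S_def T_def \<rho>_def by (rule norm_geometric_sum_sq_le)
  have "1 \<le> \<rho>" unfolding \<rho>_def using z by (simp add: one_le_power)
  have "(\<rho> - 1) / (cmod (z - 1))\<^sup>2 = (\<rho> - 1) * (cmod S)\<^sup>2 / ((cmod (z - 1))\<^sup>2 * (cmod S)\<^sup>2)"
    using \<open>S \<noteq> 0\<close> by simp
  also have "\<dots> \<le> (\<rho> - 1) * (real n * T) / ((cmod (z - 1))\<^sup>2 * (cmod S)\<^sup>2)"
    using cs \<open>1 \<le> \<rho>\<close> by (intro divide_right_mono mult_left_mono) auto
  also have "\<dots> = real n * (\<rho> ^ n - 1) / ((cmod (z - 1))\<^sup>2 * (cmod S)\<^sup>2)"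
    by (simp add: T)
  also have "\<dots> = real n * ((cmod (z ^ n))\<^sup>2 - 1) / (cmod (z ^ n - 1))\<^sup>2"
    by (simp add: S \<rho>_def norm_mult norm_power power_mult_distrib power_mult[symmetric] mult.commute)
  finally have "2 * horo z + 1 \<le> real n * (2 * horo (z ^ n) + 1)"
    using \<open>z \<noteq> 1\<close> zn by (simp add: horo_double_plus_1 \<rho>_def)
  thus ?thesis by (simp add: field_simps)
qed

section \<open>The maps \<open>h\<^sub>n\<close> and \<open>h\<^sub>m\<^sub>,\<^sub>n\<close>\<close>

definition parabolic_moebius :: "real \<Rightarrow> complex \<Rightarrow> complex" where
  "parabolic_moebius a v = of_real a * v / (1 + of_real (a - 1) * v)"

lemma parabolic_moebius_1: "a \<noteq> 0 \<Longrightarrow> parabolic_moebius a 1 = 1"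
  by (simp add: parabolic_moebius_def)

lemma parabolic_moebius_minus_1:
  "1 + of_real (a - 1) * v \<noteq> 0 \<Longrightarrow> parabolic_moebius a v - 1 = (v - 1) / (1 + of_real (a - 1) * v)"
  by (simp add: parabolic_moebius_def field_simps)

lemma parabolic_moebius_eq_1_iff:
  "1 + of_real (a - 1) * v \<noteq> 0 \<Longrightarrow> parabolic_moebius a v = 1 \<longleftrightarrow> v = 1"
  using parabolic_moebius_minus_1[of a v] by auto

text \<open>In the coordinate \<open>1 / (v - 1)\<close> the map is the affine map \<open>w \<mapsto> a w + (a - 1)\<close>.\<close>

lemma horo_parabolic_moebius:
  assumes "1 + of_real (a - 1) * v \<noteq> 0" "v \<noteq> 1"
  shows "horo (parabolic_moebius a v) = a - 1 + a * horo v"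
proof -
  have "1 / (parabolic_moebius a v - 1) = of_real (a - 1) + of_real a * (1 / (v - 1))"
    using assms by (simp add: parabolic_moebius_minus_1 field_simps)
  thus ?thesis by (simp add: horo_def Re_divide)
qed

lemma norm_parabolic_moebius_ge_1:
  assumes "1 \<le> a" "1 + of_real (a - 1) * v \<noteq> 0" "1 \<le> cmod v"
  shows "1 \<le> cmod (parabolic_moebius a v)"
proof (cases "v = 1")
  case False
  have "- 1 / 2 \<le> horo v" using horo_ge_half_iff[OF False] assms(3) by simp
  moreover have "a * (- 1 / 2) \<le> a * horo v"
    using calculation assms(1) by (intro mult_left_mono) auto
  ultimately have "- 1 / 2 \<le> a - 1 + a * horo v" using assms(1) by linarith
  thus ?thesis
    using assms(2) False horo_ge_half_iff parabolic_moebius_eq_1_iff horo_parabolic_moebius by metis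
qed (use assms in \<open>simp add: parabolic_moebius_1\<close>)

lemma norm_parabolic_moebius_gt_1:
  assumes "1 \<le> a" "1 + of_real (a - 1) * v \<noteq> 0" "1 < cmod v"
  shows "1 < cmod (parabolic_moebius a v)"
proof -
  have "v \<noteq> 1" using assms(3) by auto
  have "- 1 / 2 < horo v" using horo_gt_half_iff[OF \<open>v \<noteq> 1\<close>] assms(3) by simp
  moreover have "a * (- 1 / 2) < a * horo v"
    using calculation assms(1) by (intro mult_strict_left_mono) auto
  ultimately have "- 1 / 2 < a - 1 + a * horo v" using assms(1) by linarith
  thus ?thesis
    using assms(2) \<open>v \<noteq> 1\<close> horo_gt_half_iff parabolic_moebius_eq_1_iff horo_parabolic_moebius by metis
qed

lemma parabolic_moebius_denom_nonzero:
  assumes "2 \<le> a" "1 < cmod v"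
  shows "1 + of_real (a - 1) * v \<noteq> 0"
proof
  assume "1 + of_real (a - 1) * v = 0"
  hence "(a - 1) * cmod v = 1"
    using assms(1) by (metis add_eq_0_iff norm_minus_cancel norm_mult norm_of_real norm_one abs_of_nonneg diff_ge_0_iff_ge one_le_numeral order_trans)
  moreover have "1 * 1 < (a - 1) * cmod v" using assms by (intro mult_le_less_imp_less) auto
  ultimately show False by simp
qed

lemma parabolic_moebius_has_derivative:
  assumes "a \<noteq> 0"
  shows "(parabolic_moebius a has_field_derivative 1 / of_real a) (at 1)"
proof -
  have "(parabolic_moebius a has_field_derivative
      (of_real a * (1 + of_real (a - 1)) - of_real a * of_real (a - 1)) / (1 + of_real (a - 1))\<^sup>2) (at 1)"
    unfolding parabolic_moebius_def[abs_def] using assms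
    by (auto intro!: derivative_eq_intros simp: power2_eq_square)
  thus ?thesis using assms by (simp add: field_simps power2_eq_square)
qed

lemma hn_eq: "hn n z = parabolic_moebius (real n) (z ^ n)"
  by (simp add: hn_def parabolic_moebius_def)

lemma hmn_eq: "hmn m n z = parabolic_moebius (real (m * n)) (z ^ m) ^ n"
  by (simp add: hmn_def parabolic_moebius_def power_divide power_mult_distrib power_mult)

lemma hn_ext_Some:
  "hn_ext n (Some z) = (if 1 + of_real (real n - 1) * z ^ n = 0 then None
     else Some (parabolic_moebius (real n) (z ^ n)))"
  by (simp add: hn_ext_def hn_eq)

lemma hmn_ext_Some:
  "hmn_ext m n (Some z) = (if 1 + of_real (real (m * n) - 1) * z ^ m = 0 then None
     else Some (parabolic_moebius (real (m * n)) (z ^ m) ^ n))"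
  by (simp add: hmn_ext_def hmn_eq)

lemma hn_ext_None: "hn_ext n None = Some (of_real (real n / (real n - 1)))"
  by (simp add: hn_ext_def)

lemma hmn_ext_None: "hmn_ext m n None = Some (of_real ((real (m * n) / (real (m * n) - 1)) ^ n))"
  by (simp add: hmn_ext_def power_divide)

lemma hn_1: "0 < n \<Longrightarrow> hn n 1 = 1"
  by (simp add: hn_eq parabolic_moebius_1)

lemma hmn_1: "0 < m \<Longrightarrow> 0 < n \<Longrightarrow> hmn m n 1 = 1"
  by (simp add: hmn_eq parabolic_moebius_1)

lemma power_has_derivative_at_1: "((\<lambda>z. z ^ n) has_field_derivative of_nat n) (at (1 :: complex))"
  by (auto intro!: derivative_eq_intros)

lemma hn_has_derivative:
  assumes "0 < n"
  shows "(hn n has_field_derivative 1) (at 1)"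
proof -
  have "(parabolic_moebius (real n) has_field_derivative 1 / of_nat n) (at ((\<lambda>z. z ^ n) 1))"
    using parabolic_moebius_has_derivative[of "real n"] assms by simp
  from DERIV_chain[OF this power_has_derivative_at_1]
  show ?thesis using assms by (simp add: hn_eq[abs_def] o_def)
qed

lemma hmn_has_derivative:
  assumes "0 < m" "0 < n"
  shows "(hmn m n has_field_derivative 1) (at 1)"
proof -
  have "(parabolic_moebius (real (m * n)) has_field_derivative 1 / of_nat (m * n)) (at ((\<lambda>z. z ^ m) 1))"
    using parabolic_moebius_has_derivative[of "real (m * n)"] assms by simp
  from DERIV_chain[OF this power_has_derivative_at_1]
  have "((\<lambda>z. parabolic_moebius (real (m * n)) (z ^ m)) has_field_derivative 1 / of_nat n) (at 1)"
    using assms by (simp add: o_def)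
  moreover have "((\<lambda>w. w ^ n) has_field_derivative of_nat n) (at (parabolic_moebius (real (m * n)) (1 ^ m)))"
    using power_has_derivative_at_1 assms by (simp add: parabolic_moebius_1)
  ultimately show ?thesis
    using DERIV_chain[of "\<lambda>w. w ^ n"] assms by (fastforce simp: hmn_eq[abs_def] o_def)
qed

text \<open>Landing exactly on the fixed point \<open>1\<close> is exempt: there \<open>horo\<close> has the junk value \<open>0\<close>.\<close>

definition horo_advancing :: "(complex option \<Rightarrow> complex option) \<Rightarrow> real \<Rightarrow> bool" where
  "horo_advancing f \<delta> \<longleftrightarrow>
     (\<forall>z w. 1 \<le> cmod z \<longrightarrow> f (Some z) = Some w \<longrightarrow> w \<noteq> 1 \<longrightarrow> horo z + \<delta> \<le> horo w)"

lemma horo_advancing_hn_ext: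
  assumes "0 < n"
  shows "horo_advancing (hn_ext n) ((real n - 1) / 2)"
  unfolding horo_advancing_def
proof (intro allI impI)
  fix z w assume z: "1 \<le> cmod z" and w: "hn_ext n (Some z) = Some w" and "w \<noteq> 1"
  have D: "1 + of_real (real n - 1) * z ^ n \<noteq> 0" and w_eq: "w = parabolic_moebius (real n) (z ^ n)"
    using w by (auto simp: hn_ext_Some split: if_splits)
  have "z ^ n \<noteq> 1" using \<open>w \<noteq> 1\<close> w_eq parabolic_moebius_1 assms by auto
  have "horo w = real n - 1 + real n * horo (z ^ n)"
    using horo_parabolic_moebius[OF D \<open>z ^ n \<noteq> 1\<close>] w_eq by simp
  with horo_power_ge[OF z \<open>z ^ n \<noteq> 1\<close>] show "horo z + (real n - 1) / 2 \<le> horo w"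
    by (simp add: field_simps)
qed

lemma horo_advancing_hmn_ext:
  assumes "0 < m" "0 < n"
  shows "horo_advancing (hmn_ext m n) ((real (m * n) - 1) / (2 * real n))"
  unfolding horo_advancing_def
proof (intro allI impI)
  fix z w assume z: "1 \<le> cmod z" and w: "hmn_ext m n (Some z) = Some w" and "w \<noteq> 1"
  define g where "g = parabolic_moebius (real (m * n)) (z ^ m)"
  have D: "1 + of_real (real (m * n) - 1) * z ^ m \<noteq> 0" and w_eq: "w = g ^ n"
    using w by (auto simp: hmn_ext_Some g_def split: if_splits)
  have "z ^ m \<noteq> 1" using \<open>w \<noteq> 1\<close> w_eq parabolic_moebius_1 assms by (auto simp: g_def)
  have zm: "1 \<le> cmod (z ^ m)" using z by (simp add: norm_power one_le_power)
  have g: "1 \<le> cmod g"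
    unfolding g_def using assms mult_mono[of 1 "real m" 1 "real n"]
    by (intro norm_parabolic_moebius_ge_1 D zm) simp
  have horo_g: "horo g = real (m * n) - 1 + real (m * n) * horo (z ^ m)"
    unfolding g_def using horo_parabolic_moebius[OF D \<open>z ^ m \<noteq> 1\<close>] .
  have "real n * (horo z - (real m - 1) / 2) \<le> real n * (real m * horo (z ^ m))"
    using horo_power_ge[OF z \<open>z ^ m \<noteq> 1\<close>] by (intro mult_left_mono) auto
  moreover have "horo g - (real n - 1) / 2 \<le> real n * horo w"
    using horo_power_ge[OF g] \<open>w \<noteq> 1\<close> w_eq by simp
  ultimately have "real n * horo z + (real (m * n) - 1) / 2 \<le> real n * horo w"
    unfolding horo_g by (simp add: algebra_simps) argo
  thus "horo z + (real (m * n) - 1) / (2 * real n) \<le> horo w"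
    using assms(2) by (simp add: field_simps)
qed

lemma horo_advancing_maps_Dr'_closure:
  assumes f: "horo_advancing f \<delta>" "0 < \<delta>" and f_None: "f None = Some (of_real c)" "1 < c"
    and r: "1 \<le> r"
  shows "f ` Dr'_closure r \<subseteq> insert (Some 1) (Dr' r)"
proof
  fix x assume "x \<in> f ` Dr'_closure r"
  then consider "x = f None" | z where "r \<le> cmod (z - of_real (1 - r))" "x = f (Some z)"
    unfolding Dr'_closure_def by auto
  thus "x \<in> insert (Some 1) (Dr' r)"
  proof cases
    case 1
    have "cmod (of_real c - of_real (1 - r) :: complex) = c - 1 + r"
      using f_None(2) r by (simp flip: of_real_diff)
    thus ?thesis using 1 f_None r unfolding Dr'_def by auto
  next
    case (2 z)
    have "cmod (z - of_real (1 - r)) \<le> cmod z + cmod (of_real (1 - r) :: complex)"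
      by (rule norm_triangle_ineq4)
    also have "cmod (of_real (1 - r) :: complex) = r - 1"
      using r by (simp only: norm_of_real)
    finally have z: "1 \<le> cmod z" using 2 by linarith
    have horo_z: "- 1 / (2 * r) \<le> horo z"
      using 2 r horo_ge_iff[of z r] by (cases "z = 1") auto
    show ?thesis
    proof (cases "f (Some z)")
      case None thus ?thesis using 2 by (simp add: Dr'_def)
    next
      case (Some w)
      show ?thesis
      proof (cases "w = 1")
        case False
        have "horo z + \<delta> \<le> horo w" using f(1) z Some False by (auto simp: horo_advancing_def)
        hence "- 1 / (2 * r) < horo w" using horo_z f(2) by linarith
        hence "r < cmod (w - of_real (1 - r))" using horo_gt_iff[OF False, of r] r by simp
        thus ?thesis using 2 Some by (simp add: Dr'_def)
      qed (use 2 Some in simp)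
    qed
  qed
qed

section \<open>The Riemann sphere\<close>

lemma sph_Some: "sph (Some z) = (of_real (2 / (1 + (cmod z)\<^sup>2)) * z, ((cmod z)\<^sup>2 - 1) / ((cmod z)\<^sup>2 + 1))"
  by (simp add: sph_def)

lemma sph_None: "sph None = (0, 1)"
  by (simp add: sph_def)

text \<open>The image under \<open>sph\<close> of the point with homogeneous coordinates \<open>[a : b]\<close>; unlike \<open>a / b\<close>
  it depends continuously on \<open>(a, b) \<noteq> (0, 0)\<close>.\<close>

definition sph_hom :: "complex \<Rightarrow> complex \<Rightarrow> complex \<times> real" where
  "sph_hom a b = (of_real (2 / ((cmod a)\<^sup>2 + (cmod b)\<^sup>2)) * (a * cnj b),
                  ((cmod a)\<^sup>2 - (cmod b)\<^sup>2) / ((cmod a)\<^sup>2 + (cmod b)\<^sup>2))"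

lemma sph_hom_Some:
  assumes "b \<noteq> 0"
  shows "sph_hom a b = sph (Some (a / b))"
proof -
  define A B where "A = (cmod a)\<^sup>2" and "B = (cmod b)\<^sup>2"
  have "0 < B" "0 \<le> A" "0 < A + B" using assms by (simp_all add: A_def B_def add_nonneg_pos)
  have q: "(cmod (a / b))\<^sup>2 = A / B" by (simp add: A_def B_def norm_divide power_divide)
  have "A / B - 1 = (A - B) / B" "A / B + 1 = (A + B) / B"
    using \<open>0 < B\<close> by (simp_all add: field_simps)
  hence "2 / (1 + A / B) = 2 / (A + B) * B" "(A / B - 1) / (A / B + 1) = (A - B) / (A + B)"
    using \<open>0 < B\<close> by (simp_all add: add.commute[of 1])
  moreover have "of_real B * a / b = a * cnj b"
    using assms by (simp add: B_def field_simps flip: complex_norm_square)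
  ultimately have "of_real (2 / (1 + A / B)) * (a / b) = of_real (2 / (A + B)) * (a * cnj b)"
    by (metis mult.assoc of_real_mult times_divide_eq_right)
  thus ?thesis
    using \<open>(A / B - 1) / (A / B + 1) = (A - B) / (A + B)\<close>
    unfolding sph_hom_def sph_Some q A_def[symmetric] B_def[symmetric] by (simp only:)
qed

lemma sph_hom_None: "a \<noteq> 0 \<Longrightarrow> sph_hom a 0 = sph None"
  by (simp add: sph_hom_def sph_def)

lemma sph_hom_scale:
  assumes "c \<noteq> 0"
  shows "sph_hom (c * a) (c * b) = sph_hom a b"
proof -
  define A B C where "A = (cmod a)\<^sup>2" and "B = (cmod b)\<^sup>2" and "C = (cmod c)\<^sup>2"
  have "C \<noteq> 0" using assms by (simp add: C_def)
  have norms: "(cmod (c * a))\<^sup>2 = C * A" "(cmod (c * b))\<^sup>2 = C * B"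
    by (simp_all add: A_def B_def C_def norm_mult power_mult_distrib)
  have "c * a * cnj (c * b) = of_real C * (a * cnj b)"
    by (simp add: C_def algebra_simps flip: complex_norm_square)
  moreover have "of_real (2 / (C * A + C * B)) * (of_real C * x) = of_real (2 / (A + B)) * x"
    for x :: complex
  proof -
    have "2 / (C * A + C * B) * C = 2 / (A + B)" using \<open>C \<noteq> 0\<close> by (simp flip: distrib_left)
    thus ?thesis by (metis mult.assoc of_real_mult)
  qed
  moreover have "(C * A - C * B) / (C * A + C * B) = (A - B) / (A + B)"
    using \<open>C \<noteq> 0\<close> by (simp flip: distrib_left right_diff_distrib)
  ultimately show ?thesis
    unfolding sph_hom_def norms A_def[symmetric] B_def[symmetric] by (simp only:)
qed

lemma continuous_sph_hom:
  assumes "continuous (at x within S) a" "continuous (at x within S) b" "a x \<noteq> 0 \<or> b x \<noteq> 0"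
  shows "continuous (at x within S) (\<lambda>x. sph_hom (a x) (b x))"
proof -
  have "(cmod (a x))\<^sup>2 + (cmod (b x))\<^sup>2 \<noteq> 0"
    using assms(3) by (simp add: add_nonneg_eq_0_iff)
  thus ?thesis unfolding sph_hom_def using assms(1,2) by (intro continuous_intros) auto
qed

lemma norm_sq_plus_1_pos: "0 < 1 + (cmod z)\<^sup>2" "0 < (cmod z)\<^sup>2 + 1"
  by (auto intro: add_pos_nonneg add_nonneg_pos)

definition sph_chart :: "complex \<times> real \<Rightarrow> complex" where
  "sph_chart p = fst p / of_real (1 - snd p)"

definition sph_chart_inf :: "complex \<times> real \<Rightarrow> complex" where
  "sph_chart_inf p = cnj (fst p) / of_real (1 + snd p)"

lemma sph_chart_sph: "sph_chart (sph (Some z)) = z"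
proof -
  define t where "t = 2 / (1 + (cmod z)\<^sup>2)"
  have "t \<noteq> 0" "1 - ((cmod z)\<^sup>2 - 1) / ((cmod z)\<^sup>2 + 1) = t"
    using norm_sq_plus_1_pos[of z] unfolding t_def by (simp_all add: field_simps)
  thus ?thesis by (simp add: sph_chart_def sph_def flip: t_def)
qed

lemma sph_chart_inf_sph: "sph_chart_inf (sph (Some z)) = 1 / z"
proof -
  define t where "t = 2 / (1 + (cmod z)\<^sup>2)"
  have "t \<noteq> 0" "1 + ((cmod z)\<^sup>2 - 1) / ((cmod z)\<^sup>2 + 1) = t * (cmod z)\<^sup>2"
    using norm_sq_plus_1_pos[of z] unfolding t_def by (simp_all add: field_simps)
  hence "sph_chart_inf (sph (Some z)) = cnj z / of_real ((cmod z)\<^sup>2)"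
    by (simp add: sph_chart_inf_def sph_def flip: t_def)
  also have "\<dots> = 1 / z"
    by (cases "z = 0") (simp_all add: field_simps flip: complex_norm_square)
  finally show ?thesis .
qed

lemma sph_chart_inf_None: "sph_chart_inf (sph None) = 0"
  by (simp add: sph_chart_inf_def sph_def)

lemma snd_sph_Some_less: "snd (sph (Some z)) < 1"
  using norm_sq_plus_1_pos[of z] by (simp add: sph_def field_simps)

lemma snd_sph_Some_eq_minus_1: "snd (sph (Some z)) = - 1 \<longleftrightarrow> z = 0"
  by (simp add: sph_def norm_sq_plus_1_pos[THEN less_imp_neq, symmetric] field_simps)

lemma sph_inverse: "(if snd (sph w) = 1 then None else Some (sph_chart (sph w))) = w"
  by (cases w) (simp_all add: sph_chart_sph less_imp_neq[OF snd_sph_Some_less] sph_None)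

lemma inj_sph: "inj sph"
  by (metis injI sph_inverse)

lemma sph_hom_quotient: "a \<noteq> 0 \<or> b \<noteq> 0 \<Longrightarrow> sph_hom a b = sph (if b = 0 then None else Some (a / b))"
  by (auto simp: sph_hom_None sph_hom_Some)

lemma continuous_on_sph_hom:
  assumes "continuous_on S a" "continuous_on S b" "\<And>x. x \<in> S \<Longrightarrow> a x \<noteq> 0 \<or> b x \<noteq> 0"
  shows "continuous_on S (\<lambda>x. sph_hom (a x) (b x))"
proof -
  have "(cmod (a x))\<^sup>2 + (cmod (b x))\<^sup>2 \<noteq> 0" if "x \<in> S" for x
    using assms(3)[OF that] by (simp add: add_nonneg_eq_0_iff)
  thus ?thesis unfolding sph_hom_def using assms(1,2) by (intro continuous_intros) auto
qed

lemma continuous_on_sph_chart: "continuous_on {x. snd x < 1} sph_chart"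
  unfolding sph_chart_def by (intro continuous_intros) auto

lemma continuous_on_sph_chart_inf: "continuous_on {x. - 1 < snd x} sph_chart_inf"
proof -
  have "of_real (1 + t) \<noteq> (0 :: complex)" if "- 1 < t" for t
    using that by (simp only: of_real_eq_0_iff)
  thus ?thesis unfolding sph_chart_inf_def by (intro continuous_intros) auto
qed

definition sphere_continuous :: "(complex option \<Rightarrow> complex option) \<Rightarrow> bool" where
  "sphere_continuous f \<longleftrightarrow> continuous_on (range sph) (\<lambda>x. sph (f (inv sph x)))"

text \<open>Near finite points the map is \<open>[p z : q z]\<close>, near infinity it is \<open>[p' u : q' u]\<close> in the
  coordinate \<open>u = 1 / z\<close>.\<close>

lemma sphere_continuous_rational:
  fixes f :: "complex option \<Rightarrow> complex option" and p q p' q' :: "complex \<Rightarrow> complex"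
  assumes f_Some: "\<And>z. f (Some z) = (if q z = 0 then None else Some (p z / q z))"
    and f_None: "f None = Some (p' 0 / q' 0)" "q' 0 \<noteq> 0"
    and coprime: "\<And>z. p z \<noteq> 0 \<or> q z \<noteq> 0"
    and reciprocal: "\<And>u. u \<noteq> 0 \<Longrightarrow> \<exists>c. c \<noteq> 0 \<and> p' u = c * p (1 / u) \<and> q' u = c * q (1 / u)"
    and continuous: "continuous_on UNIV p" "continuous_on UNIV q"
      "continuous_on UNIV p'" "continuous_on UNIV q'"
  shows "sphere_continuous f"
proof -
  define F where "F = (\<lambda>x. sph (f (inv sph x)))"
  have F_sph: "F (sph w) = sph (f w)" for w
    using inj_sph by (simp add: F_def)
  have finite: "sph_hom (p z) (q z) = sph (f (Some z))" for z
    using coprime sph_hom_quotient f_Some by simp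
  have at_inf: "sph_hom (p' u) (q' u) = sph (f (if u = 0 then None else Some (1 / u)))"
    and coprime': "p' u \<noteq> 0 \<or> q' u \<noteq> 0" for u
  proof -
    have "sph_hom (p' u) (q' u) = sph (f (if u = 0 then None else Some (1 / u))) \<and> (p' u \<noteq> 0 \<or> q' u \<noteq> 0)"
    proof (cases "u = 0")
      case True thus ?thesis using f_None sph_hom_Some by simp
    next
      case False
      then obtain c where "c \<noteq> 0" "p' u = c * p (1 / u)" "q' u = c * q (1 / u)"
        using reciprocal by blast
      thus ?thesis using False finite[of "1 / u"] coprime[of "1 / u"] sph_hom_scale by simp
    qed
    thus "sph_hom (p' u) (q' u) = sph (f (if u = 0 then None else Some (1 / u)))"
      and "p' u \<noteq> 0 \<or> q' u \<noteq> 0" by auto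
  qed
  define S T where "S = range sph \<inter> {x. snd x < 1}" and "T = range sph \<inter> {x. - 1 < snd x}"
  have "- 1 < snd (sph None)" by (simp add: sph_None)
  hence "sph None \<in> T" "sph (Some z) \<in> S" for z
    unfolding S_def T_def using snd_sph_Some_less[of z] by blast+
  hence "sph w \<in> S \<union> T" for w by (cases w) auto
  hence ST: "range sph = S \<union> T" unfolding S_def T_def by blast
  have "continuous_on S F"
  proof (rule continuous_on_eq)
    have "continuous_on S sph_chart"
      by (rule continuous_on_subset[OF continuous_on_sph_chart]) (auto simp: S_def)
    thus "continuous_on S (\<lambda>x. sph_hom (p (sph_chart x)) (q (sph_chart x)))"
      using coprime
      by (intro continuous_on_sph_hom continuous_on_compose2[OF continuous(1)] continuous_on_compose2[OF continuous(2)]) auto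
    fix x assume "x \<in> S"
    then obtain w where x: "x = sph w" and w: "snd (sph w) < 1" unfolding S_def by blast
    then obtain z where "x = sph (Some z)" by (cases w) (auto simp: sph_None)
    thus "sph_hom (p (sph_chart x)) (q (sph_chart x)) = F x"
      by (simp add: sph_chart_sph finite F_sph)
  qed
  moreover have "continuous_on T F"
  proof (rule continuous_on_eq)
    have "continuous_on T sph_chart_inf"
      by (rule continuous_on_subset[OF continuous_on_sph_chart_inf]) (auto simp: T_def)
    thus "continuous_on T (\<lambda>x. sph_hom (p' (sph_chart_inf x)) (q' (sph_chart_inf x)))"
      using coprime'
      by (intro continuous_on_sph_hom continuous_on_compose2[OF continuous(3)] continuous_on_compose2[OF continuous(4)]) auto
    fix x assume "x \<in> T"
    then obtain w where x: "x = sph w" and w: "- 1 < snd (sph w)" unfolding T_def by blast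
    show "sph_hom (p' (sph_chart_inf x)) (q' (sph_chart_inf x)) = F x"
    proof (cases w)
      case None
      thus ?thesis using at_inf[of 0] by (simp add: x sph_chart_inf_None F_sph)
    next
      case (Some z)
      hence "z \<noteq> 0" using w snd_sph_Some_eq_minus_1 by (metis less_irrefl)
      thus ?thesis using at_inf[of "1 / z"] by (simp add: x Some sph_chart_inf_sph F_sph)
    qed
  qed
  moreover have "openin (top_of_set (range sph)) S"
    unfolding S_def by (intro openin_open_Int open_Collect_less continuous_intros)
  moreover have "openin (top_of_set (range sph)) T"
    unfolding T_def by (intro openin_open_Int open_Collect_less continuous_intros)
  ultimately have "continuous_on (S \<union> T) F"
    unfolding ST by (intro continuous_on_Un_local_open)
  thus ?thesis unfolding sphere_continuous_def F_def[symmetric] ST .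
qed

section \<open>Parabolic basins\<close>

lemma tendsto_1_if_horo_at_top:
  assumes "filterlim (\<lambda>k. horo (Y k)) at_top F"
  shows "(Y \<longlongrightarrow> 1) F"
proof -
  have "cmod (Y k - 1) \<le> inverse (horo (Y k))" if "0 < horo (Y k)" for k
  proof -
    have "Y k \<noteq> 1" using that by auto
    have "horo (Y k) \<le> cmod (1 / (Y k - 1))" unfolding horo_def by (rule complex_Re_le_cmod)
    thus ?thesis using that \<open>Y k \<noteq> 1\<close> by (simp add: norm_divide field_simps)
  qed
  moreover have "eventually (\<lambda>k. 0 < horo (Y k)) F"
    using assms by (simp add: filterlim_at_top_dense)
  ultimately have "eventually (\<lambda>k. cmod (Y k - 1) \<le> inverse (horo (Y k))) F"
    by (auto elim: eventually_mono)
  hence "((\<lambda>k. Y k - 1) \<longlongrightarrow> 0) F"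
    by (rule Lim_null_comparison[OF _ tendsto_inverse_0_at_top[OF assms]])
  thus ?thesis by (simp add: Lim_null[of Y])
qed

lemma isCont_sph_Some: "isCont (\<lambda>z. sph (Some z)) z"
proof -
  have "continuous_on UNIV (\<lambda>z. sph_hom z 1)"
    by (intro continuous_on_sph_hom continuous_intros) auto
  thus ?thesis by (simp add: sph_hom_Some continuous_on_eq_continuous_at)
qed

lemma basin_mapsto:
  assumes "w \<in> basin f a"
  shows "f w \<in> basin f a"
proof -
  have shift: "(f ^^ k) (f w) = (f ^^ Suc k) w" for k
    by (simp add: funpow_Suc_right del: funpow.simps)
  from assms have lim: "(\<lambda>k. sph ((f ^^ k) w)) \<longlonglongrightarrow> sph a" and ne: "\<And>k. (f ^^ k) w \<noteq> a"
    unfolding basin_def by auto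
  have "(\<lambda>k. sph ((f ^^ k) (f w))) \<longlonglongrightarrow> sph a"
    unfolding shift by (rule LIMSEQ_Suc[OF lim])
  moreover have "(f ^^ k) (f w) \<noteq> a" for k
    unfolding shift by (rule ne)
  ultimately show ?thesis unfolding basin_def by simp
qed

lemma basin_if_mapsto:
  assumes "f w \<in> basin f a" "w \<noteq> a"
  shows "w \<in> basin f a"
proof -
  have shift: "(f ^^ k) (f w) = (f ^^ Suc k) w" for k
    by (simp add: funpow_Suc_right del: funpow.simps)
  have lim: "(\<lambda>k. sph ((f ^^ Suc k) w)) \<longlonglongrightarrow> sph a" and ne: "\<And>k. (f ^^ Suc k) w \<noteq> a"
    using assms(1) unfolding basin_def shift[symmetric] by auto
  have "(\<lambda>k. sph ((f ^^ k) w)) \<longlonglongrightarrow> sph a" by (rule LIMSEQ_imp_Suc[OF lim])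
  moreover have "(f ^^ k) w \<noteq> a" for k
    using ne assms(2) by (cases k) auto
  ultimately show ?thesis unfolding basin_def by simp
qed

lemma connected_sph_exterior: "connected (sph ` insert None (Some ` {z. 1 < cmod z}))"
proof -
  have "sph ` insert None (Some ` {z. 1 < cmod z}) = (\<lambda>u. sph_hom 1 u) ` ball 0 1"
  proof (intro equalityI subsetI)
    fix x assume "x \<in> sph ` insert None (Some ` {z. 1 < cmod z})"
    then consider "x = sph None" | z where "1 < cmod z" "x = sph (Some z)" by auto
    thus "x \<in> (\<lambda>u. sph_hom 1 u) ` ball 0 1"
    proof cases
      case 1 thus ?thesis using sph_hom_None[of 1] by (auto intro!: image_eqI[of _ _ 0])
    next
      case (2 z)
      hence "z \<noteq> 0" by auto
      hence "x = sph_hom 1 (1 / z)" "1 / z \<in> ball 0 1"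
        using 2 sph_hom_Some[where a = 1 and b = "1 / z"] by (auto simp: norm_divide divide_less_eq)
      thus ?thesis by blast
    qed
  next
    fix x assume "x \<in> (\<lambda>u. sph_hom 1 u) ` ball 0 1"
    then obtain u where u: "cmod u < 1" "x = sph_hom 1 u" by auto
    show "x \<in> sph ` insert None (Some ` {z. 1 < cmod z})"
    proof (cases "u = 0")
      case True thus ?thesis using u sph_hom_None[of 1] by auto
    next
      case False
      hence "x = sph (Some (1 / u))" "1 < cmod (1 / u)"
        using u sph_hom_Some by (simp_all add: norm_divide)
      thus ?thesis by blast
    qed
  qed
  moreover have "continuous_on (ball 0 1) (\<lambda>u. sph_hom 1 u)"
    by (intro continuous_on_sph_hom continuous_intros) auto
  ultimately show ?thesis by (metis connected_ball connected_continuous_image)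
qed

lemma immediate_basin_containing:
  assumes cont: "sphere_continuous f" and E: "connected (sph ` E)" "E \<subseteq> basin f a"
    and w: "w \<in> E" "f w \<in> E"
  shows "\<exists>U. immediate_basin f a U \<and> E \<subseteq> U"
proof -
  define F where "F = (\<lambda>x. sph (f (inv sph x)))"
  have F_sph: "F (sph v) = sph (f v)" for v
    using inj_sph by (simp add: F_def)
  define C where "C = connected_component_set (sph ` basin f a) (sph w)"
  have C: "C \<subseteq> sph ` basin f a" "connected C"
    unfolding C_def by (simp_all add: connected_component_subset)
  have EC: "sph ` E \<subseteq> C"
    unfolding C_def using E w by (intro connected_component_maximal) auto
  have "F ` C \<subseteq> C"
  proof -
    have "continuous_on C F"
      using cont unfolding sphere_continuous_def F_def
      by (rule continuous_on_subset) (use C(1) in auto)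
    hence "connected (F ` C)" using C(2) by (rule connected_continuous_image)
    moreover have "F ` C \<subseteq> sph ` basin f a"
      using C(1) basin_mapsto by (auto simp: F_sph)
    moreover have "sph (f w) \<in> F ` C"
      using EC w F_sph by (metis image_eqI subsetD)
    ultimately have "F ` C \<subseteq> connected_component_set (sph ` basin f a) (sph (f w))"
      by (intro connected_component_maximal)
    also have "\<dots> = C"
      using EC w(2) unfolding C_def by (intro connected_component_eq) auto
    finally show ?thesis .
  qed
  define U where "U = sph -` C"
  have "sph ` U = C" unfolding U_def using C(1) by auto
  moreover have "f ` U \<subseteq> U"
  proof
    fix y assume "y \<in> f ` U"
    then obtain v where "sph v \<in> C" "y = f v" unfolding U_def by blast
    hence "sph y \<in> F ` C" by (metis F_sph image_eqI)
    thus "y \<in> U" using \<open>F ` C \<subseteq> C\<close> by (auto simp: U_def)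
  qed
  moreover have "E \<subseteq> U" using EC by (auto simp: U_def)
  ultimately show ?thesis
    unfolding immediate_basin_def C_def using E(2) w(1) by blast
qed

lemma horo_advancing_exterior_in_basin:
  assumes f: "horo_advancing f \<delta>" "0 < \<delta>"
    and exterior: "\<And>z. 1 < cmod z \<Longrightarrow> \<exists>w. f (Some z) = Some w \<and> w \<noteq> 1"
    and y: "1 < cmod y"
  shows "Some y \<in> basin f (Some 1)"
proof -
  have step: "\<exists>w. f (Some z) = Some w \<and> 1 < cmod w \<and> horo z + \<delta> \<le> horo w" if z: "1 < cmod z" for z
  proof -
    obtain w where w: "f (Some z) = Some w" "w \<noteq> 1" using exterior[OF z] by blast
    have "horo z + \<delta> \<le> horo w" using f(1) z w by (auto simp: horo_advancing_def)
    moreover have "- 1 / 2 < horo z" using horo_gt_half_iff[of z] z by (cases "z = 1") auto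
    ultimately have "1 < cmod w" using horo_gt_half_iff[OF w(2)] f(2) by simp
    thus ?thesis using w \<open>horo z + \<delta> \<le> horo w\<close> by blast
  qed
  have "\<exists>y'. (f ^^ k) (Some y) = Some y' \<and> 1 < cmod y' \<and> horo y + real k * \<delta> \<le> horo y'" for k
  proof (induction k)
    case 0 thus ?case using y by simp
  next
    case (Suc k)
    then obtain y' where y': "(f ^^ k) (Some y) = Some y'" "1 < cmod y'" "horo y + real k * \<delta> \<le> horo y'"
      by blast
    moreover obtain y'' where "f (Some y') = Some y''" "1 < cmod y''" "horo y' + \<delta> \<le> horo y''"
      using step[OF y'(2)] by blast
    ultimately show ?case by (auto simp: algebra_simps)
  qed
  then obtain Y where Y: "\<And>k. (f ^^ k) (Some y) = Some (Y k)" "\<And>k. 1 < cmod (Y k)"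
    "\<And>k. horo y + real k * \<delta> \<le> horo (Y k)"
    by metis
  have "filterlim (\<lambda>k. horo y + real k * \<delta>) at_top sequentially"
    by (intro filterlim_tendsto_add_at_top[OF tendsto_const]
        filterlim_at_top_mult_tendsto_pos[OF tendsto_const f(2) filterlim_real_sequentially])
  hence "filterlim (\<lambda>k. horo (Y k)) at_top sequentially"
    by (rule filterlim_at_top_mono) (use Y(3) in auto)
  hence "(\<lambda>k. sph (Some (Y k))) \<longlonglongrightarrow> sph (Some 1)"
    by (intro isCont_tendsto_compose[OF isCont_sph_Some] tendsto_1_if_horo_at_top)
  moreover have "Y k \<noteq> 1" for k using Y(2)[of k] by auto
  ultimately show ?thesis unfolding basin_def using Y(1) by auto
qed

lemma horo_advancing_immediate_basin:
  assumes f: "horo_advancing f \<delta>" "0 < \<delta>"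
    and exterior: "\<And>z. 1 < cmod z \<Longrightarrow> \<exists>w. f (Some z) = Some w \<and> w \<noteq> 1"
    and f_None: "f None = Some (of_real c)" "1 < c"
    and cont: "sphere_continuous f"
  shows "\<exists>U. immediate_basin f (Some 1) U \<and> insert None (Some ` {z. 1 < cmod z}) \<subseteq> U"
proof (rule immediate_basin_containing[OF cont connected_sph_exterior])
  have c: "1 < cmod (of_real c :: complex)" using f_None(2) by simp
  have "Some ` {z. 1 < cmod z} \<subseteq> basin f (Some 1)"
    using horo_advancing_exterior_in_basin[OF f exterior] by auto
  moreover have "f None \<in> basin f (Some 1)"
    using calculation c f_None(1) by blast
  hence "None \<in> basin f (Some 1)" by (rule basin_if_mapsto) simp
  ultimately show "insert None (Some ` {z. 1 < cmod z}) \<subseteq> basin f (Some 1)" by auto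
  show "None \<in> insert None (Some ` {z. 1 < cmod z})" by simp
  show "f None \<in> insert None (Some ` {z. 1 < cmod z})" using f_None(1) c by simp
qed

lemma hn_ext_exterior:
  assumes "2 \<le> n" "1 < cmod z"
  shows "\<exists>w. hn_ext n (Some z) = Some w \<and> w \<noteq> 1"
proof -
  have zn: "1 < cmod (z ^ n)" using assms by (simp add: norm_power one_less_power)
  have D: "1 + of_real (real n - 1) * z ^ n \<noteq> 0"
    using assms zn by (intro parabolic_moebius_denom_nonzero) auto
  have "1 < cmod (parabolic_moebius (real n) (z ^ n))"
    using assms D zn by (intro norm_parabolic_moebius_gt_1) auto
  thus ?thesis using D by (auto simp: hn_ext_Some)
qed

lemma hmn_ext_exterior:
  assumes "2 \<le> m" "1 \<le> n" "1 < cmod z"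
  shows "\<exists>w. hmn_ext m n (Some z) = Some w \<and> w \<noteq> 1"
proof -
  have "2 \<le> real (m * n)" using assms(1,2) mult_mono[of 2 "real m" 1 "real n"] by simp
  have zm: "1 < cmod (z ^ m)" using assms by (simp add: norm_power one_less_power)
  have D: "1 + of_real (real (m * n) - 1) * z ^ m \<noteq> 0"
    using \<open>2 \<le> real (m * n)\<close> zm by (rule parabolic_moebius_denom_nonzero)
  have "1 < cmod (parabolic_moebius (real (m * n)) (z ^ m))"
    using \<open>2 \<le> real (m * n)\<close> D zm by (intro norm_parabolic_moebius_gt_1) auto
  hence "1 < cmod (parabolic_moebius (real (m * n)) (z ^ m) ^ n)"
    using assms(2) by (simp add: norm_power one_less_power)
  thus ?thesis using D by (auto simp: hmn_ext_Some)
qed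

lemma sphere_continuous_hn_ext:
  assumes "2 \<le> n"
  shows "sphere_continuous (hn_ext n)"
proof (rule sphere_continuous_rational[where p = "\<lambda>z. of_nat n * z ^ n" and q = "\<lambda>z. 1 + (of_nat n - 1) * z ^ n"
      and p' = "\<lambda>u. of_nat n" and q' = "\<lambda>u. u ^ n + (of_nat n - 1)"])
  have "0 ^ n + (of_nat n - 1 :: complex) = of_nat (n - 1)" using assms by (simp add: of_nat_diff)
  moreover have "of_nat (n - 1) \<noteq> (0 :: complex)" using assms by simp
  ultimately show "0 ^ n + (of_nat n - 1 :: complex) \<noteq> 0" by metis
  show "hn_ext n None = Some (of_nat n / (0 ^ n + (of_nat n - 1)))"
    using assms by (simp add: hn_ext_def)
  show "\<exists>c. c \<noteq> 0 \<and> of_nat n = c * (of_nat n * (1 / u) ^ n)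
          \<and> u ^ n + (of_nat n - 1) = c * (1 + (of_nat n - 1) * (1 / u) ^ n)" if "u \<noteq> 0" for u :: complex
    using that by (intro exI[of _ "u ^ n"]) (simp add: power_divide field_simps)
  show "of_nat n * z ^ n \<noteq> 0 \<or> 1 + (of_nat n - 1) * z ^ n \<noteq> 0" for z :: complex
    using assms by (cases "z = 0") (auto simp: power_0_left)
qed (auto simp: hn_ext_def hn_def intro!: continuous_intros)

lemma sphere_continuous_hmn_ext:
  assumes "2 \<le> m" "1 \<le> n"
  shows "sphere_continuous (hmn_ext m n)"
proof -
  define K :: complex where "K = of_nat (m * n)"
  have "m * n \<noteq> 0" "m * n \<noteq> 1" using assms by simp_all
  hence "K \<noteq> 0" "K - 1 \<noteq> 0" unfolding K_def by (metis of_nat_eq_0_iff, metis of_nat_eq_1_iff right_minus_eq)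
  show ?thesis
  proof (rule sphere_continuous_rational[where p = "\<lambda>z. K ^ n * z ^ (m * n)" and q = "\<lambda>z. (1 + (K - 1) * z ^ m) ^ n"
        and p' = "\<lambda>u. K ^ n" and q' = "\<lambda>u. (u ^ m + (K - 1)) ^ n"])
    show "hmn_ext m n None = Some (K ^ n / (0 ^ m + (K - 1)) ^ n)"
      using assms by (simp add: hmn_ext_def K_def power_0_left)
    show "(0 ^ m + (K - 1)) ^ n \<noteq> 0" using assms \<open>K - 1 \<noteq> 0\<close> by (simp add: power_0_left)
    show "K ^ n * z ^ (m * n) \<noteq> 0 \<or> (1 + (K - 1) * z ^ m) ^ n \<noteq> 0" for z
      using assms \<open>K \<noteq> 0\<close> by (cases "z = 0") (auto simp: power_0_left)
    show "\<exists>c. c \<noteq> 0 \<and> K ^ n = c * (K ^ n * (1 / u) ^ (m * n))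
            \<and> (u ^ m + (K - 1)) ^ n = c * (1 + (K - 1) * (1 / u) ^ m) ^ n" if "u \<noteq> 0" for u
    proof (intro exI[of _ "u ^ (m * n)"] conjI)
      have "u ^ m * (1 + (K - 1) * (1 / u) ^ m) = u ^ m + (K - 1)"
        using that by (simp add: power_divide field_simps)
      thus "(u ^ m + (K - 1)) ^ n = u ^ (m * n) * (1 + (K - 1) * (1 / u) ^ m) ^ n"
        by (metis power_mult power_mult_distrib)
    qed (use that in \<open>simp_all add: power_divide\<close>)
  qed (use assms in \<open>auto simp: hmn_ext_def hmn_def K_def intro!: continuous_intros\<close>)
qed

theorem lemma2p6:
  fixes m n :: nat
  assumes "m \<ge> 2" and "n \<ge> 2"
  shows "hn n 1 = 1 \<and> (hn n has_field_derivative 1) (at 1)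
       \<and> hmn m n 1 = 1 \<and> (hmn m n has_field_derivative 1) (at 1)
       \<and> (\<forall>r::real. r \<ge> 1 \<longrightarrow>
             hn_ext n ` Dr'_closure r \<subseteq> insert (Some 1) (Dr' r)
           \<and> hmn_ext m n ` Dr'_closure r \<subseteq> insert (Some 1) (Dr' r))
       \<and> (\<exists>U. immediate_basin (hn_ext n) (Some 1) U
              \<and> insert None (Some ` {z. cmod z > 1}) \<subseteq> U)
       \<and> (\<exists>U. immediate_basin (hmn_ext m n) (Some 1) U
              \<and> insert None (Some ` {z. cmod z > 1}) \<subseteq> U)"
proof -
  have m: "0 < m" and n: "0 < n" "1 \<le> n" using assms by auto
  have "2 \<le> m * n" using assms mult_le_mono[of 2 m 1 n] by simp
  hence N: "2 \<le> real (m * n)" "2 \<le> real n" using assms(2) by (metis of_nat_le_iff of_nat_numeral)+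
  have ratio_gt_1: "1 < a / (a - 1)" if "2 \<le> a" for a :: real
    using that by (simp add: less_divide_eq)
  have hn: "horo_advancing (hn_ext n) ((real n - 1) / 2)" "0 < (real n - 1) / 2"
    "1 < real n / (real n - 1)"
    using horo_advancing_hn_ext[OF n(1)] N(2) ratio_gt_1 by simp_all
  have hmn: "horo_advancing (hmn_ext m n) ((real (m * n) - 1) / (2 * real n))"
    "0 < (real (m * n) - 1) / (2 * real n)" "1 < (real (m * n) / (real (m * n) - 1)) ^ n"
    using horo_advancing_hmn_ext[OF m n(1)] N ratio_gt_1[OF N(1)] n(1)
    by (simp_all del: of_nat_mult add: divide_pos_pos one_less_power)
  show ?thesis
    using hn_1 hn_has_derivative hmn_1 hmn_has_derivative m n assms
      horo_advancing_maps_Dr'_closure[OF hn(1,2) hn_ext_None hn(3)]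
      horo_advancing_maps_Dr'_closure[OF hmn(1,2) hmn_ext_None hmn(3)]
      horo_advancing_immediate_basin[OF hn(1,2) hn_ext_exterior hn_ext_None hn(3) sphere_continuous_hn_ext]
      horo_advancing_immediate_basin[OF hmn(1,2) hmn_ext_exterior hmn_ext_None hmn(3) sphere_continuous_hmn_ext]
    by auto
qed

end
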